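(* Let $\ell\in\{0,1,2,\ldots\}$. As $q\to\infty$, $\tilde\gamma_\ell(q)$ has the asymptotic expansion $$\tilde\gamma_\ell(q)\sim\frac{\log^\ell q}{2q}-\frac{\ell\log^{\ell-1}q-\log^\ell q}{4q^2}+\sum_{k=1}^\infty\frac{E_{2k+1}(0)}{2q^{2k+2}(2k+1)!}\sum_{j=0}^{\ell}\binom{\ell}{j}j!\,s(2k+2,j+1)\log^{\ell-j}q .$$
   Context: For $q>0$, $\zeta_E(z,q)=\sum_{n=0}^\infty (-1)^n (n+q)^{-z}$ for $\mathrm{Re}(z)>0$, extended by analytic continuation to an entire function of $z$. The modified Stieltjes constants $\tilde\gamma_k(q)$ are defined by the Taylor expansion $\zeta_E(z,q)=\sum_{k=0}^\infty\frac{(-1)^k\tilde\gamma_k(q)}{k!}(z-1)^k$. $E_n(x)$ is the $n$-th Euler polynomial, defined by $\frac{2e^{xt}}{e^t+1}=\sum_{n\ge0}E_n(x)\frac{t^n}{n!}$. $s(n,k)$ are the (signed) Stirling numbers of the first kind: $x(x-1)\cdots(x-n+1)=\sum_{k=0}^n s(n,k)x^k$. The symbol $\sim$ means asymptotic expansion in the sense of Poincaré (each truncation has error of the order of the first omitted term) as $q\to\infty$. *)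

theory Defs
  imports "HOL-Complex_Analysis.Complex_Analysis"
          "HOL-Computational_Algebra.Formal_Power_Series"
          "HOL-Computational_Algebra.Polynomial"
          "HOL-Library.Landau_Symbols"
begin

definition zetaE :: "real \<Rightarrow> complex \<Rightarrow> complex" where
  "zetaE q = (THE f. f holomorphic_on UNIV \<and>
      (\<forall>z. 0 < Re z \<longrightarrow>
         (\<lambda>n. (-1) ^ n * (complex_of_real (real n + q)) powr (- z)) sums f z))"

text \<open>Modified Stieltjes constants: zeta_E(z,q) = sum_k (-1)^k gt_k(q)/k! (z-1)^k,
  i.e. gt_k(q) = (-1)^k times the k-th derivative of zeta_E(.,q) at z = 1.\<close>
definition mod_stieltjes :: "nat \<Rightarrow> real \<Rightarrow> complex" where
  "mod_stieltjes k q = (-1) ^ k * (deriv ^^ k) (zetaE q) 1"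

definition euler_poly :: "nat \<Rightarrow> real \<Rightarrow> real" where
  "euler_poly n x = fact n * fps_nth (fps_const 2 * fps_exp x * inverse (fps_exp 1 + 1)) n"

definition stirling1s :: "nat \<Rightarrow> nat \<Rightarrow> int" where
  "stirling1s n k = coeff (\<Prod>i<n. [:- int i, 1:]) k"

end

theory Submission
  imports Defs
begin

text \<open>For \<open>Re z > -M\<close>, Euler--Boole summation writes \<open>\<zeta>\<^sub>E(z, q)\<close> as
  \<open>\<Sum>k\<le>M. E\<^sub>k(0)/(2 k!) f\<^sub>k(0)\<close>, where \<open>f\<^sub>k\<close> is the \<open>k\<close>-th derivative of
  \<open>x \<mapsto> (x + q) powr -z\<close>, plus a remainder: an alternating series of integrals of
  \<open>E\<^sub>M(t) f\<^sub>M\<^sub>+\<^sub>1(n + t)\<close>. The remainder converges locally uniformly, so it is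
  holomorphic on the half-plane, and for \<open>q \<ge> 1\<close> it is \<open>O(q powr (1/2 - M))\<close> on the
  disc \<open>|z - 1| \<le> 1/2\<close>. Differentiating \<open>l\<close> times at \<open>z = 1\<close>, the main terms produce the
  Stirling numbers (as Taylor coefficients of the Pochhammer symbol at \<open>1\<close>) and powers of
  \<open>ln q\<close>, while Cauchy's estimate keeps the remainder \<open>O(q powr (1/2 - M))\<close>. Finally
  \<open>E\<^sub>k(0) = 0\<close> for even \<open>k \<ge> 2\<close> but not for odd \<open>k\<close>, so the surviving terms decrease by
  a factor of order \<open>q\<^sup>-\<^sup>2\<close> and form an asymptotic expansion.\<close>

unbundle no vec_syntax

section \<open>Euler numbers\<close>

definition euler_fps :: "real fps" where
  "euler_fps = fps_const 2 * inverse (fps_exp 1 + 1)"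

lemma euler_poly_conv_fps: "euler_poly n x = fact n * (fps_exp x * euler_fps) $ n"
  by (simp add: euler_poly_def euler_fps_def ac_simps)

lemma euler_fps_times: "euler_fps * (fps_exp 1 + 1) = 2"
proof -
  have "inverse (fps_exp 1 + 1) * (fps_exp 1 + 1 :: real fps) = 1"
    by (rule inverse_mult_eq_1) simp
  then show ?thesis
    unfolding euler_fps_def by (metis mult.assoc mult.right_neutral numeral_fps_const)
qed

lemma euler_fps_nth_0 [simp]: "euler_fps $ 0 = 1"
  by (simp add: euler_fps_def)

lemma euler_poly_0_left [simp]: "euler_poly 0 x = 1"
  by (simp add: euler_poly_conv_fps)

lemma euler_poly_at_0: "euler_poly n 0 = fact n * euler_fps $ n"
  by (simp add: euler_poly_conv_fps)

lemma euler_poly_expand: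
  "euler_poly n x = (\<Sum>i\<le>n. real (n choose i) * euler_poly i 0 * x ^ (n - i))"
proof -
  have "euler_poly n x = (\<Sum>i\<le>n. fact n * (euler_fps $ i * x ^ (n - i) / fact (n - i)))"
    by (simp add: euler_poly_conv_fps mult.commute[of "fps_exp x"] fps_mult_nth
        atLeast0AtMost sum_distrib_left)
  also have "\<dots> = (\<Sum>i\<le>n. real (n choose i) * euler_poly i 0 * x ^ (n - i))"
    by (intro sum.cong refl)
       (simp add: euler_poly_at_0 binomial_fact field_simps)
  finally show ?thesis .
qed

lemma euler_poly_has_real_derivative:
  "(euler_poly (Suc n) has_real_derivative real (Suc n) * euler_poly n x) (at x within S)"
proof -
  let ?c = "\<lambda>m i. real (m choose i) * euler_poly i 0"
  have "euler_poly (Suc n) = (\<lambda>x. \<Sum>i\<le>Suc n. ?c (Suc n) i * x ^ (Suc n - i))"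
    by (intro ext) (rule euler_poly_expand)
  then have "(euler_poly (Suc n) has_real_derivative
      (\<Sum>i\<le>Suc n. ?c (Suc n) i * (real (Suc n - i) * x ^ (Suc n - i - Suc 0)))) (at x within S)"
    by (simp only:) (intro DERIV_sum DERIV_cmult DERIV_pow)
  also have "(\<Sum>i\<le>Suc n. ?c (Suc n) i * (real (Suc n - i) * x ^ (Suc n - i - Suc 0)))
      = (\<Sum>i\<le>n. ?c (Suc n) i * (real (Suc n - i) * x ^ (Suc n - i - Suc 0)))"
    by simp
  also have "\<dots> = (\<Sum>i\<le>n. real (Suc n) * (?c n i * x ^ (n - i)))"
  proof (intro sum.cong refl)
    fix i
    have "Suc n - i - Suc 0 = n - i"
      by simp
    then have "?c (Suc n) i * (real (Suc n - i) * x ^ (Suc n - i - Suc 0))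
        = (real (Suc n - i) * real (Suc n choose i)) * (euler_poly i 0 * x ^ (n - i))"
      by (simp only: mult_ac)
    also have "real (Suc n - i) * real (Suc n choose i) = real (Suc n) * real (n choose i)"
      using binomial_absorb_comp[of "Suc n" i] by (metis diff_Suc_1 of_nat_mult)
    finally show "?c (Suc n) i * (real (Suc n - i) * x ^ (Suc n - i - Suc 0))
        = real (Suc n) * (?c n i * x ^ (n - i))"
      by (simp only: mult_ac)
  qed
  also have "\<dots> = real (Suc n) * euler_poly n x"
    unfolding euler_poly_expand[of n x] sum_distrib_left ..
  finally show ?thesis .
qed

lemma euler_poly_at_1: "n \<noteq> 0 \<Longrightarrow> euler_poly n 1 = - euler_poly n 0"
proof -
  assume "n \<noteq> 0"
  have "fps_exp 1 * euler_fps = 2 - euler_fps"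
    using euler_fps_times by (simp add: algebra_simps)
  then have "(fps_exp 1 * euler_fps) $ n = - euler_fps $ n"
    using \<open>n \<noteq> 0\<close> by (simp add: numeral_fps_const)
  then show ?thesis
    by (simp add: euler_poly_conv_fps euler_poly_at_0)
qed

text \<open>The odd part of the generating function is \<open>- tanh (t/2)\<close>, which satisfies a Riccati
  equation; its coefficients alternate in sign, and the even ones vanish.\<close>

lemma euler_fps_deriv: "fps_deriv euler_fps = fps_const (1/2) * euler_fps * euler_fps - euler_fps"
proof -
  let ?E = "fps_exp 1 + 1 :: real fps"
  have "(fps_deriv euler_fps - (fps_const (1/2) * euler_fps * euler_fps - euler_fps)) * ?E
      = fps_deriv euler_fps * ?E - fps_const (1/2) * euler_fps * (euler_fps * ?E) + euler_fps * ?E"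
    by (simp add: algebra_simps)
  also have "\<dots> = fps_deriv euler_fps * ?E - fps_const (1/2) * euler_fps * 2 + euler_fps * ?E"
    by (simp add: euler_fps_times)
  also have "\<dots> = fps_deriv euler_fps * ?E + euler_fps * fps_exp 1"
    by (simp add: algebra_simps numeral_fps_const fps_const_mult[symmetric] del: fps_const_mult)
  also have "\<dots> = 0"
    using arg_cong[OF euler_fps_times, of fps_deriv] by (simp add: add.commute)
  finally have "(fps_deriv euler_fps - (fps_const (1/2) * euler_fps * euler_fps - euler_fps)) * ?E = 0" .
  moreover have "?E \<noteq> 0"
    by (rule fps_nonzeroI[of _ 0]) simp
  ultimately show ?thesis
    by simp
qed

lemma euler_fps_rec:
  assumes "n \<noteq> 0"
  shows "real (Suc n) * euler_fps $ Suc n = (\<Sum>i\<in>{1..<n}. euler_fps $ i * euler_fps $ (n - i)) / 2"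
proof -
  have split: "{0..n} = insert 0 (insert n {1..<n})"
    using assms by auto
  have "fps_deriv euler_fps $ n = (fps_const (1/2) * euler_fps * euler_fps - euler_fps) $ n"
    by (simp only: euler_fps_deriv)
  then show ?thesis
    using assms by (simp add: mult.assoc fps_mult_nth split) (simp add: field_simps)
qed

lemma euler_fps_nth_1: "euler_fps $ 1 = - 1/2"
proof -
  have "fps_deriv euler_fps $ 0 = (fps_const (1/2) * euler_fps * euler_fps - euler_fps) $ 0"
    by (simp only: euler_fps_deriv)
  then show ?thesis
    by (simp only: fps_deriv_nth fps_sub_nth fps_mult_nth_0 fps_nth_fps_const euler_fps_nth_0) simp
qed

lemma euler_fps_even_eq_0: "even n \<Longrightarrow> n \<noteq> 0 \<Longrightarrow> euler_fps $ n = 0"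
proof (induction n rule: less_induct)
  case (less n)
  then obtain m where m: "n = Suc m" "odd m"
    by (cases n) auto
  have "(\<Sum>i\<in>{1..<m}. euler_fps $ i * euler_fps $ (m - i)) = 0"
  proof (rule sum.neutral, intro ballI)
    fix i assume "i \<in> {1..<m}"
    then show "euler_fps $ i * euler_fps $ (m - i) = 0"
      using less.IH[of i] less.IH[of "m - i"] m by (cases "even i") auto
  qed
  then show ?case
    using euler_fps_rec[of m] m odd_pos by simp
qed

lemma euler_fps_odd_sign: "odd n \<Longrightarrow> (-1) ^ (n div 2) * euler_fps $ n < 0"
proof (induction n rule: less_induct)
  case (less n)
  then obtain k where k: "n = Suc (2 * k)"
    by (metis oddE Suc_eq_plus1)
  show ?case
  proof (cases "k = 0")
    case True
    then show ?thesis
      using k euler_fps_nth_1 by simp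
  next
    case False
    let ?t = "\<lambda>i. (-1) ^ (k - 1) * (euler_fps $ i * euler_fps $ (2 * k - i))"
    have term_pos: "0 < ?t i" if i: "i \<in> {1..<2 * k}" "odd i" for i
    proof -
      obtain a where a: "i = 2 * a + 1"
        using i oddE by blast
      define b where "b = k - 1 - a"
      have b: "2 * k - i = 2 * b + 1"
        using i a by (auto simp: b_def)
      have "(-1 :: real) ^ (k - 1) = (-1) ^ a * (-1) ^ b"
        using i a by (simp add: b_def power_add[symmetric])
      then have "?t i = ((-1) ^ (i div 2) * euler_fps $ i) * ((-1) ^ ((2 * k - i) div 2) * euler_fps $ (2 * k - i))"
        using a b by (simp add: ac_simps)
      also have "\<dots> > 0"
        using i k less.IH[of i] less.IH[of "2 * k - i"] b by (intro mult_neg_neg) auto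
      finally show ?thesis .
    qed
    have term_nonneg: "0 \<le> ?t i" if i: "i \<in> {1..<2 * k}" for i
      using i term_pos[of i] euler_fps_even_eq_0[of i] by (cases "even i") auto
    have "0 < (\<Sum>i\<in>{1..<2 * k}. ?t i)"
      using False by (intro sum_pos2[where i = 1] term_nonneg term_pos) auto
    also have "\<dots> = - ((-1) ^ (n div 2) * euler_fps $ n) * (2 * real n)"
      using euler_fps_rec[of "2 * k"] False k by (cases k) (simp_all add: sum_distrib_left field_simps)
    finally have "0 < - ((-1) ^ (n div 2) * euler_fps $ n) * (2 * real n)" .
    moreover have "0 < 2 * real n"
      using k by simp
    ultimately have "0 < - ((-1) ^ (n div 2) * euler_fps $ n)"
      by (rule zero_less_mult_pos2)
    then show ?thesis
      by simp
  qed
qed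

lemma euler_poly_at_0_even: "even n \<Longrightarrow> n \<noteq> 0 \<Longrightarrow> euler_poly n 0 = 0"
  by (simp add: euler_poly_at_0 euler_fps_even_eq_0)

lemma euler_poly_at_0_odd: "odd n \<Longrightarrow> euler_poly n 0 \<noteq> 0"
  using euler_fps_odd_sign[of n] by (auto simp: euler_poly_at_0)

lemma euler_poly_1_0: "euler_poly 1 0 = - 1/2"
  using euler_fps_nth_1 by (simp add: euler_poly_at_0)

section \<open>Stirling numbers and the Pochhammer symbol\<close>

lemma stirling1s_0: "stirling1s 0 k = (if k = 0 then 1 else 0)"
  by (simp add: stirling1s_def)

lemma stirling1s_Suc:
  "stirling1s (Suc n) k = (if k = 0 then 0 else stirling1s n (k - 1)) - int n * stirling1s n k"
proof -
  have "(\<Prod>i<Suc n. [:- int i, 1:]) = (\<Prod>i<n. [:- int i, 1:]) * [:- int n, 1:]"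
    by simp
  then show ?thesis
    unfolding stirling1s_def by (simp add: coeff_pCons' algebra_simps)
qed

lemma stirling1s_Suc_0 [simp]: "stirling1s (Suc n) 0 = 0"
  by (induction n) (simp_all add: stirling1s_Suc stirling1s_0)

lemma stirling1s_Suc_1: "stirling1s (Suc n) (Suc 0) = (-1) ^ n * fact n"
proof (induction n)
  case 0
  then show ?case
    by (simp add: stirling1s_Suc stirling1s_0)
next
  case (Suc n)
  then show ?case
    using stirling1s_Suc[of "Suc n" "Suc 0"] by (simp add: algebra_simps)
qed

definition neg_pochhammer_poly :: "nat \<Rightarrow> complex poly" where
  "neg_pochhammer_poly k = (\<Prod>i<k. [:- (1 + of_nat i), -1:])"

lemma neg_pochhammer_poly_Suc:
  "neg_pochhammer_poly (Suc k) = neg_pochhammer_poly k * [:- (1 + of_nat k), -1:]"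
  by (simp add: neg_pochhammer_poly_def)

lemma sum_stirling1s_1:
  "(\<Sum>j=0..l. real (l choose j) * fact j * real_of_int (stirling1s (Suc 0) (Suc j)) * x ^ (l - j)) = x ^ l"
proof -
  have "(\<Sum>j=0..l. real (l choose j) * fact j * real_of_int (stirling1s (Suc 0) (Suc j)) * x ^ (l - j))
      = (\<Sum>j=0..l. (if j = 0 then x ^ l else 0))"
    by (intro sum.cong refl) (simp add: stirling1s_Suc stirling1s_0)
  then show ?thesis
    by simp
qed

lemma sum_stirling1s_2:
  "(\<Sum>j=0..l. real (l choose j) * fact j * real_of_int (stirling1s (Suc (Suc 0)) (Suc j)) * x ^ (l - j))
     = real l * x ^ (l - 1) - x ^ l"
proof -
  have "(\<Sum>j=0..l. real (l choose j) * fact j * real_of_int (stirling1s (Suc (Suc 0)) (Suc j)) * x ^ (l - j))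
      = (\<Sum>j=0..l. (if j = 1 then real l * x ^ (l - 1) else 0)) - (\<Sum>j=0..l. (if j = 0 then x ^ l else 0))"
    unfolding sum_subtractf[symmetric] by (intro sum.cong refl) (auto simp: stirling1s_Suc stirling1s_0)
  also have "\<dots> = real l * x ^ (l - 1) - x ^ l"
    by (cases l) auto
  finally show ?thesis .
qed

lemma coeff_neg_pochhammer_poly:
  "coeff (neg_pochhammer_poly k) j
     = (-1) ^ j * of_int (stirling1s (Suc k) (Suc j))"
proof (induction k arbitrary: j)
  case 0
  then show ?case
    by (simp add: neg_pochhammer_poly_def stirling1s_Suc stirling1s_0)
next
  case (Suc k)
  have "coeff (neg_pochhammer_poly (Suc k)) j
      = - of_nat (Suc k) * coeff (neg_pochhammer_poly k) j
        - (if j = 0 then 0 else coeff (neg_pochhammer_poly k) (j - 1))"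
    by (simp add: neg_pochhammer_poly_Suc coeff_pCons' algebra_simps)
  also have "\<dots> = (-1) ^ j * of_int (stirling1s (Suc (Suc k)) (Suc j))"
    by (cases j) (simp_all add: Suc.IH stirling1s_Suc[of "Suc k"] algebra_simps)
  finally show ?case .
qed

lemma neg_pochhammer_conv_poly:
  "(-1) ^ k * pochhammer z k = poly (neg_pochhammer_poly k) (z - 1 :: complex)"
  by (induction k) (simp_all add: neg_pochhammer_poly_def pochhammer_rec' algebra_simps)

lemma higher_deriv_poly_shift:
  "(deriv ^^ j) (\<lambda>z. poly p (z - c)) = (\<lambda>z. poly ((pderiv ^^ j) p) (z - c :: complex))"
proof (induction j)
  case 0
  then show ?case
    by simp
next
  case (Suc j)
  have "((\<lambda>z. poly ((pderiv ^^ j) p) (z - c)) has_field_derivative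
      poly (pderiv ((pderiv ^^ j) p)) (z - c)) (at z)" for z
    using DERIV_chain2[OF poly_DERIV, of "\<lambda>z. z - c" 1 z] by (auto intro!: derivative_eq_intros)
  then show ?case
    by (simp add: Suc.IH DERIV_imp_deriv fun_eq_iff)
qed

lemma higher_deriv_neg_pochhammer_at_1:
  "(-1) ^ j * (deriv ^^ j) (\<lambda>z :: complex. (-1) ^ k * pochhammer z k) 1
     = fact j * of_int (stirling1s (Suc k) (Suc j))"
proof -
  have "(deriv ^^ j) (\<lambda>z :: complex. (-1) ^ k * pochhammer z k) 1
      = poly ((pderiv ^^ j) (neg_pochhammer_poly k)) (0 :: complex)"
    by (simp only: neg_pochhammer_conv_poly higher_deriv_poly_shift) simp
  also have "\<dots> = pochhammer 1 j * coeff (neg_pochhammer_poly k) j"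
    by (simp add: poly_0_coeff_0 coeff_higher_pderiv)
  finally show ?thesis
    by (simp add: coeff_neg_pochhammer_poly pochhammer_fact mult_ac)
qed

lemma higher_deriv_exp_linear:
  "(deriv ^^ j) (\<lambda>z. exp (a * z + b)) = (\<lambda>z. a ^ j * exp (a * z + b :: complex))"
proof (induction j)
  case 0
  then show ?case
    by simp
next
  case (Suc j)
  have "((\<lambda>z. a ^ j * exp (a * z + b)) has_field_derivative a ^ Suc j * exp (a * z + b)) (at z)" for z
    by (auto intro!: derivative_eq_intros)
  then show ?case
    by (simp add: Suc.IH DERIV_imp_deriv fun_eq_iff)
qed

lemma holomorphic_on_pochhammer [holomorphic_intros]:
  "f holomorphic_on S \<Longrightarrow> (\<lambda>z. pochhammer (f z) k) holomorphic_on S"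
  unfolding pochhammer_prod by (intro holomorphic_intros)

lemma norm_pochhammer_le:
  fixes z :: "'a :: real_normed_field"
  assumes "norm z \<le> r"
  shows "norm (pochhammer z k) \<le> pochhammer r k"
proof -
  have "norm (pochhammer z k) \<le> (\<Prod>i<k. norm (z + of_nat i))"
    unfolding pochhammer_prod atLeast0LessThan by (rule norm_prod_le)
  also have "\<dots> \<le> (\<Prod>i<k. r + of_nat i)"
    using assms by (intro prod_mono) (auto intro: order_trans[OF norm_triangle_ineq])
  also have "\<dots> = pochhammer r k"
    by (simp add: pochhammer_prod atLeast0LessThan)
  finally show ?thesis .
qed

section \<open>Euler--Boole summation for the alternating Hurwitz series\<close>

definition powr_deriv :: "real \<Rightarrow> nat \<Rightarrow> complex \<Rightarrow> real \<Rightarrow> complex" where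
  "powr_deriv q k z x = (-1) ^ k * pochhammer z k * of_real (x + q) powr (- z - of_nat k)"

lemma powr_deriv_0: "powr_deriv q 0 z x = of_real (x + q) powr (- z)"
  by (simp add: powr_deriv_def)

lemma powr_deriv_eq_exp:
  assumes "x + q > 0"
  shows "powr_deriv q k z x = (-1) ^ k * pochhammer z k * exp ((- z - of_nat k) * of_real (ln (x + q)))"
  using assms by (simp add: powr_deriv_def powr_def Ln_of_real del: of_real_add)

lemma holomorphic_powr_deriv: "x + q > 0 \<Longrightarrow> (\<lambda>z. powr_deriv q k z x) holomorphic_on S"
  by (subst powr_deriv_eq_exp) (auto intro!: holomorphic_intros)

lemma powr_deriv_has_vector_derivative:
  assumes "a + t + q > 0"
  shows "((\<lambda>t. powr_deriv q k z (a + t)) has_vector_derivative powr_deriv q (Suc k) z (a + t))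
           (at t within S)"
proof -
  let ?w = "- z - of_nat k" and ?c = "(-1) ^ k * pochhammer z k"
  let ?u = "of_real t + of_real (a + q) :: complex"
  have "?u \<notin> \<real>\<^sub>\<le>\<^sub>0"
    using assms by (auto simp: complex_nonpos_Reals_iff)
  then have outer: "((\<lambda>u. u powr ?w) has_field_derivative ?w * ?u powr (?w - 1)) (at ?u)"
    by (rule has_field_derivative_powr)
  have inner: "((\<lambda>u. u + of_real (a + q)) has_field_derivative 1) (at (of_real t))"
    by (auto intro!: derivative_eq_intros)
  have "((\<lambda>u. ?c * (u + of_real (a + q)) powr ?w) has_field_derivative
      ?c * (?w * ?u powr (?w - 1) * 1)) (at (of_real t))"
    by (rule DERIV_cmult[OF DERIV_chain2[OF outer inner]])
  then have "((\<lambda>t. ?c * (of_real t + of_real (a + q)) powr ?w) has_vector_derivative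
      ?c * (?w * ?u powr (?w - 1) * 1)) (at t within S)"
    by (rule has_vector_derivative_real_field)
  moreover have "?c * (?w * ?u powr (?w - 1) * 1) = powr_deriv q (Suc k) z (a + t)"
    by (simp add: powr_deriv_def pochhammer_rec' algebra_simps)
  ultimately show ?thesis
    by (simp add: powr_deriv_def add_ac)
qed

lemma norm_powr_deriv:
  assumes "x + q > 0"
  shows "norm (powr_deriv q k z x) = norm (pochhammer z k) * (x + q) powr - (Re z + real k)"
  using assms by (simp add: powr_deriv_def norm_mult norm_power norm_powr_real_powr)

lemma powr_deriv_tendsto_0:
  assumes "q > 0" "Re z + real k > 0"
  shows "(\<lambda>n. powr_deriv q k z (real n)) \<longlonglongrightarrow> 0"
proof -
  have "filterlim (\<lambda>n. q + real n) at_top sequentially"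
    by (rule filterlim_tendsto_add_at_top[OF tendsto_const filterlim_real_sequentially])
  then have "(\<lambda>n. (real n + q) powr - (Re z + real k)) \<longlonglongrightarrow> 0"
    using assms by (intro tendsto_neg_powr) (simp_all add: add.commute)
  then have "(\<lambda>n. norm (pochhammer z k) * (real n + q) powr - (Re z + real k)) \<longlonglongrightarrow> 0"
    by (rule tendsto_mult_right_zero)
  moreover have "norm (powr_deriv q k z (real n)) = norm (pochhammer z k) * (real n + q) powr - (Re z + real k)"
    for n
    using assms by (intro norm_powr_deriv) simp
  ultimately show ?thesis
    by (subst tendsto_norm_zero_iff[symmetric]) simp
qed

lemma tendsto_alternating_0:
  fixes f :: "nat \<Rightarrow> 'a :: real_normed_div_algebra"
  shows "f \<longlonglongrightarrow> 0 \<Longrightarrow> (\<lambda>n. (-1) ^ n * f n) \<longlonglongrightarrow> 0"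
  by (subst tendsto_norm_zero_iff[symmetric]) (simp add: norm_mult norm_power tendsto_norm_zero_iff)

lemma summable_shifted_powr:
  assumes "s > 1" "q > 0"
  shows "summable (\<lambda>n. (real n + q) powr - s)"
proof (rule summable_comparison_test_ev)
  show "summable (\<lambda>n. real n powr - s)"
    using assms summable_real_powr_iff by simp
  show "\<forall>\<^sub>F n in sequentially. norm ((real n + q) powr - s) \<le> real n powr - s"
    using eventually_gt_at_top[of "0::nat"]
  proof eventually_elim
    case (elim n)
    then show ?case
      using powr_mono2'[of "- s" "real n" "real n + q"] assms by simp
  qed
qed

lemma abs_euler_poly_le:
  assumes "t \<in> {0..1}"
  shows "\<bar>euler_poly k t\<bar> \<le> (\<Sum>i\<le>k. real (k choose i) * \<bar>euler_poly i 0\<bar>)"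
proof -
  have "\<bar>euler_poly k t\<bar> \<le> (\<Sum>i\<le>k. \<bar>real (k choose i) * euler_poly i 0 * t ^ (k - i)\<bar>)"
    unfolding euler_poly_expand[of k t] by (rule sum_abs)
  also have "\<dots> \<le> (\<Sum>i\<le>k. real (k choose i) * \<bar>euler_poly i 0\<bar>)"
    using assms by (intro sum_mono) (simp add: abs_mult mult_left_le power_le_one)
  finally show ?thesis .
qed

text \<open>\<open>euler_boole_term q k z n\<close> is the integral over \<open>[n, n+1]\<close> of the \<open>(k+1)\<close>-st
  derivative of \<open>(x + q) powr -z\<close> against \<open>E\<^sub>k(x - n)/k!\<close>; the recursion is integration
  by parts.\<close>

fun euler_boole_term :: "real \<Rightarrow> nat \<Rightarrow> complex \<Rightarrow> nat \<Rightarrow> complex" where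
  "euler_boole_term q 0 z n = powr_deriv q 0 z (real n + 1) - powr_deriv q 0 z (real n)"
| "euler_boole_term q (Suc k) z n =
     - of_real (euler_poly (Suc k) 0 / fact (Suc k)) *
       (powr_deriv q (Suc k) z (real n + 1) + powr_deriv q (Suc k) z (real n))
     - euler_boole_term q k z n"

lemma euler_boole_term_has_integral:
  assumes "q > 0"
  shows "((\<lambda>t. of_real (euler_poly k t / fact k) * powr_deriv q (Suc k) z (real n + t))
           has_integral euler_boole_term q k z n) {0..1}"
proof (induction k)
  case 0
  have "((\<lambda>t. powr_deriv q (Suc 0) z (real n + t)) has_integral
      powr_deriv q 0 z (real n + 1) - powr_deriv q 0 z (real n + 0)) {0..1}"
    using assms by (intro fundamental_theorem_of_calculus powr_deriv_has_vector_derivative) auto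
  then show ?case
    by simp
next
  case (Suc k)
  let ?g = "\<lambda>t. of_real (euler_poly (Suc k) t / fact (Suc k)) * powr_deriv q (Suc k) z (real n + t)"
  have "((\<lambda>t. of_real (euler_poly k t / fact k) * powr_deriv q (Suc k) z (real n + t)
        + of_real (euler_poly (Suc k) t / fact (Suc k)) * powr_deriv q (Suc (Suc k)) z (real n + t))
      has_integral (?g 1 - ?g 0)) {0..1}"
  proof (rule fundamental_theorem_of_calculus)
    fix t :: real
    assume "t \<in> {0..1}"
    then have pos: "real n + t + q > 0"
      using assms by simp
    have "((\<lambda>t. euler_poly (Suc k) t / fact (Suc k)) has_real_derivative euler_poly k t / fact k) (at t)"
      using euler_poly_has_real_derivative[of k t UNIV]
      by (auto intro!: derivative_eq_intros simp del: of_nat_Suc)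
    from has_vector_derivative_mult[OF has_vector_derivative_of_real[OF this]
        powr_deriv_has_vector_derivative[OF pos]]
    show "(?g has_vector_derivative
        of_real (euler_poly k t / fact k) * powr_deriv q (Suc k) z (real n + t)
        + of_real (euler_poly (Suc k) t / fact (Suc k)) * powr_deriv q (Suc (Suc k)) z (real n + t))
      (at t within {0..1})"
      by (auto intro: has_vector_derivative_at_within simp: add.commute)
  qed simp
  from has_integral_diff[OF this Suc.IH]
  have "((\<lambda>t. of_real (euler_poly (Suc k) t / fact (Suc k)) * powr_deriv q (Suc (Suc k)) z (real n + t))
      has_integral (?g 1 - ?g 0 - euler_boole_term q k z n)) {0..1}"
    by (simp only: add_diff_cancel_left')
  moreover have "?g 1 - ?g 0 - euler_boole_term q k z n = euler_boole_term q (Suc k) z n"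
    by (simp add: euler_poly_at_1 algebra_simps del: euler_poly_0_left)
  ultimately show ?case
    by simp
qed

lemma euler_boole_term_bound:
  obtains B where "B \<ge> 0"
    and "\<And>q z n. (q :: real) > 0 \<Longrightarrow> Re z + real k + 1 \<ge> 0 \<Longrightarrow>
           norm (euler_boole_term q k z n)
             \<le> B * norm (pochhammer z (Suc k)) * (real n + q) powr - (Re z + real k + 1)"
proof
  define B where "B = (\<Sum>i\<le>k. real (k choose i) * \<bar>euler_poly i 0\<bar>) / fact k"
  show "B \<ge> 0"
    by (simp add: B_def sum_nonneg)
  fix q :: real and z n
  assume assms: "q > 0" and z: "Re z + real k + 1 \<ge> 0"
  let ?K = "B * norm (pochhammer z (Suc k)) * (real n + q) powr - (Re z + real k + 1)"
  have "norm (euler_boole_term q k z n) \<le> ?K * Henstock_Kurzweil_Integration.content (cbox (0::real) 1)"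
  proof (rule has_integral_bound)
    show "((\<lambda>t. of_real (euler_poly k t / fact k) * powr_deriv q (Suc k) z (real n + t))
        has_integral euler_boole_term q k z n) (cbox 0 1)"
      using euler_boole_term_has_integral[OF assms] by simp
    fix t :: real
    assume "t \<in> cbox 0 1"
    then have t: "t \<in> {0..1}"
      by simp
    have pos: "real n + t + q > 0"
      using t assms by simp
    have "norm (of_real (euler_poly k t / fact k) * powr_deriv q (Suc k) z (real n + t))
        = \<bar>euler_poly k t / fact k\<bar> *
          (norm (pochhammer z (Suc k)) * (real n + t + q) powr - (Re z + real (Suc k)))"
      unfolding norm_mult norm_of_real norm_powr_deriv[OF pos] ..
    also have "\<dots> \<le> B * (norm (pochhammer z (Suc k)) * (real n + q) powr - (Re z + real k + 1))"
    proof (intro mult_mono mult_left_mono)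
      show "\<bar>euler_poly k t / fact k\<bar> \<le> B"
        unfolding B_def abs_divide using abs_euler_poly_le[OF t] by (simp add: divide_right_mono)
      show "(real n + t + q) powr - (Re z + real (Suc k)) \<le> (real n + q) powr - (Re z + real k + 1)"
        using t assms z powr_mono2'[of "- (Re z + real k + 1)" "real n + q" "real n + t + q"]
        by (simp add: add_ac)
    qed (use \<open>B \<ge> 0\<close> in auto)
    finally show "norm (of_real (euler_poly k t / fact k) * powr_deriv q (Suc k) z (real n + t)) \<le> ?K"
      by (simp only: mult.assoc)
  qed (use \<open>B \<ge> 0\<close> in auto)
  then show "norm (euler_boole_term q k z n) \<le> ?K"
    by simp
qed

lemma euler_boole_term_dominated:
  obtains B where "B \<ge> 0"
    and "\<And>q z n d r. q > 0 \<Longrightarrow> real n + q \<ge> 1 \<Longrightarrow> 0 \<le> d \<Longrightarrow> d \<le> Re z + real k \<Longrightarrow>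
           norm z \<le> r \<Longrightarrow> norm (euler_boole_term q k z n) \<le> B * pochhammer r (Suc k) * (real n + q) powr - (d + 1)"
proof -
  obtain B where "B \<ge> 0" and B: "\<And>q z n. q > 0 \<Longrightarrow> Re z + real k + 1 \<ge> 0 \<Longrightarrow>
      norm (euler_boole_term q k z n) \<le> B * norm (pochhammer z (Suc k)) * (real n + q) powr - (Re z + real k + 1)"
    using euler_boole_term_bound by metis
  show ?thesis
  proof (rule that[OF \<open>B \<ge> 0\<close>])
    fix q :: real and z :: complex and n :: nat and d r :: real
    assume q: "q > 0" "real n + q \<ge> 1" and d: "0 \<le> d" "d \<le> Re z + real k" and "norm z \<le> r"
    then have poch: "norm (pochhammer z (Suc k)) \<le> pochhammer r (Suc k)"
      by (intro norm_pochhammer_le)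
    moreover have "(real n + q) powr - (Re z + real k + 1) \<le> (real n + q) powr - (d + 1)"
      using q d by (intro powr_mono) auto
    moreover have "0 \<le> pochhammer r (Suc k)"
      using poch by (rule order_trans[OF norm_ge_zero])
    ultimately have "B * norm (pochhammer z (Suc k)) * (real n + q) powr - (Re z + real k + 1)
        \<le> B * pochhammer r (Suc k) * (real n + q) powr - (d + 1)"
      using \<open>B \<ge> 0\<close> by (intro mult_mono mult_left_mono) auto
    then show "norm (euler_boole_term q k z n) \<le> B * pochhammer r (Suc k) * (real n + q) powr - (d + 1)"
      using B[of q z n] q d by simp
  qed
qed

lemma summable_euler_boole_term:
  assumes "q > 0" "Re z > - real k"
  shows "summable (\<lambda>n. norm (euler_boole_term q k z n))"
proof -
  obtain B where "B \<ge> 0" and B: "\<And>z n. Re z + real k + 1 \<ge> 0 \<Longrightarrow>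
      norm (euler_boole_term q k z n) \<le> B * norm (pochhammer z (Suc k)) * (real n + q) powr - (Re z + real k + 1)"
    using euler_boole_term_bound[of k] assms(1) by metis
  show ?thesis
  proof (rule summable_comparison_test')
    show "summable (\<lambda>n. B * norm (pochhammer z (Suc k)) * (real n + q) powr - (Re z + real k + 1))"
      using assms by (intro summable_mult summable_shifted_powr) auto
    show "norm (norm (euler_boole_term q k z n))
        \<le> B * norm (pochhammer z (Suc k)) * (real n + q) powr - (Re z + real k + 1)" for n
      using B assms by simp
  qed
qed

definition euler_boole_remainder :: "real \<Rightarrow> nat \<Rightarrow> complex \<Rightarrow> complex" where
  "euler_boole_remainder q k z = (\<Sum>n. (-1) ^ n * euler_boole_term q k z n)"

lemma euler_boole_remainder_sums:
  assumes "q > 0" "Re z > - real k"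
  shows "(\<lambda>n. (-1) ^ n * euler_boole_term q k z n) sums euler_boole_remainder q k z"
  unfolding euler_boole_remainder_def
  using summable_euler_boole_term[OF assms]
  by (intro summable_sums) (rule summable_norm_cancel, simp add: norm_mult norm_power)

lemma euler_boole_remainder_Suc:
  assumes "q > 0" "Re z > - real k"
  shows "euler_boole_remainder q (Suc k) z + euler_boole_remainder q k z
           = - of_real (euler_poly (Suc k) 0 / fact (Suc k)) * powr_deriv q (Suc k) z 0"
proof -
  let ?c = "of_real (euler_poly (Suc k) 0 / fact (Suc k)) :: complex"
  let ?f = "\<lambda>n. (-1) ^ n * powr_deriv q (Suc k) z (real n)"
  have "(\<lambda>n. powr_deriv q (Suc k) z (real n)) \<longlonglongrightarrow> 0"
    using assms by (intro powr_deriv_tendsto_0) auto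
  then have "?f \<longlonglongrightarrow> 0"
    by (rule tendsto_alternating_0)
  then have "(\<lambda>n. ?c * (?f (Suc n) - ?f n)) sums (?c * (0 - ?f 0))"
    by (intro sums_mult telescope_sums)
  moreover have "(\<lambda>n. (-1) ^ n * euler_boole_term q (Suc k) z n + (-1) ^ n * euler_boole_term q k z n)
      sums (euler_boole_remainder q (Suc k) z + euler_boole_remainder q k z)"
    using assms by (intro sums_add euler_boole_remainder_sums) auto
  moreover have "(-1) ^ n * euler_boole_term q (Suc k) z n + (-1) ^ n * euler_boole_term q k z n
      = ?c * (?f (Suc n) - ?f n)" for n
    by (simp add: algebra_simps)
  ultimately show ?thesis
    by (simp add: sums_unique2)
qed

lemma holomorphic_euler_boole_term: "q > 0 \<Longrightarrow> (\<lambda>z. euler_boole_term q k z n) holomorphic_on S"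
  by (induction k) (auto intro!: holomorphic_intros holomorphic_powr_deriv)

lemma holomorphic_on_suminf:
  fixes f :: "nat \<Rightarrow> complex \<Rightarrow> complex"
  assumes S: "open S" and hol: "\<And>n. f n holomorphic_on S"
    and dom: "\<And>x. x \<in> S \<Longrightarrow> \<exists>d h. 0 < d \<and> summable h \<and>
                (\<forall>\<^sub>F n in sequentially. \<forall>y\<in>ball x d \<inter> S. norm (f n y) \<le> h n)"
  shows "(\<lambda>z. \<Sum>n. f n z) holomorphic_on S"
proof -
  have "\<exists>g g'. \<forall>x\<in>S. ((\<lambda>n. f n x) sums g x) \<and> ((\<lambda>n. deriv (f n) x) sums g' x)
      \<and> (g has_field_derivative g' x) (at x)"
    using S hol dom by (intro series_and_derivative_comparison_local) (auto intro: holomorphic_derivI)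
  then obtain g g' where g: "\<And>x. x \<in> S \<Longrightarrow> ((\<lambda>n. f n x) sums g x) \<and> (g has_field_derivative g' x) (at x)"
    by blast
  have "((\<lambda>z. \<Sum>n. f n z) has_field_derivative g' x) (at x)" if "x \<in> S" for x
  proof (rule has_field_derivative_transform_within_open[OF _ S that])
    show "(g has_field_derivative g' x) (at x)"
      using g[OF that] by blast
    show "g y = (\<Sum>n. f n y)" if "y \<in> S" for y
      using g[OF that] by (simp add: sums_iff)
  qed
  then show ?thesis
    using S by (auto simp: holomorphic_on_open)
qed

lemma holomorphic_euler_boole_remainder:
  assumes q: "q > 0"
  shows "euler_boole_remainder q k holomorphic_on {z. Re z > - real k}"
  unfolding euler_boole_remainder_def[abs_def]
proof (rule holomorphic_on_suminf)
  show "open {z. Re z > - real k}"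
    by (simp add: open_halfspace_Re_gt)
  show "(\<lambda>z. (-1) ^ n * euler_boole_term q k z n) holomorphic_on {z. Re z > - real k}" for n
    using q by (intro holomorphic_intros holomorphic_euler_boole_term)
  obtain B where "B \<ge> 0" and B: "\<And>q z n d r. q > 0 \<Longrightarrow> real n + q \<ge> 1 \<Longrightarrow> 0 \<le> d \<Longrightarrow>
      d \<le> Re z + real k \<Longrightarrow> norm z \<le> r \<Longrightarrow>
      norm (euler_boole_term q k z n) \<le> B * pochhammer r (Suc k) * (real n + q) powr - (d + 1)"
    using euler_boole_term_dominated by metis
  fix x
  assume "x \<in> {z. Re z > - real k}"
  define d where "d = (Re x + real k) / 2"
  have "d > 0"
    using \<open>x \<in> _\<close> by (simp add: d_def)
  show "\<exists>d h. 0 < d \<and> summable h \<and> (\<forall>\<^sub>F n in sequentially.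
      \<forall>y\<in>ball x d \<inter> {z. Re z > - real k}. norm ((-1) ^ n * euler_boole_term q k y n) \<le> h n)"
  proof (intro exI conjI)
    show "summable (\<lambda>n. B * pochhammer (norm x + d) (Suc k) * (real n + q) powr - (d + 1))"
      using q \<open>d > 0\<close> by (intro summable_mult summable_shifted_powr) auto
    show "\<forall>\<^sub>F n in sequentially. \<forall>y\<in>ball x d \<inter> {z. Re z > - real k}.
        norm ((-1) ^ n * euler_boole_term q k y n) \<le> B * pochhammer (norm x + d) (Suc k) * (real n + q) powr - (d + 1)"
    proof (rule eventually_mono[OF eventually_gt_at_top[of "0::nat"]], intro ballI)
      fix n :: nat and y :: complex
      assume "n > 0" and "y \<in> ball x d \<inter> {z. Re z > - real k}"
      then have "norm (x - y) < d"
        by (simp add: dist_norm)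
      then have "d \<le> Re y + real k"
        using complex_Re_le_cmod[of "x - y"] by (simp add: d_def)
      moreover have "norm y \<le> norm x + d"
        using \<open>norm (x - y) < d\<close> norm_triangle_ineq2[of y x] by (simp add: norm_minus_commute)
      ultimately
      show "norm ((-1) ^ n * euler_boole_term q k y n) \<le> B * pochhammer (norm x + d) (Suc k) * (real n + q) powr - (d + 1)"
        using B[of q n d y] q \<open>n > 0\<close> \<open>d > 0\<close> by (simp add: norm_mult norm_power)
    qed
  qed (use \<open>d > 0\<close> in simp)
qed

text \<open>The Euler--Boole formula of order \<open>M\<close>; it agrees with the alternating series for
  \<open>Re z > 0\<close> and continues it to \<open>Re z > -M\<close>.\<close>

definition euler_boole_main :: "real \<Rightarrow> nat \<Rightarrow> complex \<Rightarrow> complex" where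
  "euler_boole_main q M z = (\<Sum>k\<le>M. of_real (euler_poly k 0 / (2 * fact k)) * powr_deriv q k z 0)"

definition euler_boole :: "real \<Rightarrow> nat \<Rightarrow> complex \<Rightarrow> complex" where
  "euler_boole q M z = euler_boole_main q M z - (-1) ^ M * euler_boole_remainder q M z / 2"

lemma holomorphic_euler_boole_main: "q > 0 \<Longrightarrow> euler_boole_main q M holomorphic_on S"
  unfolding euler_boole_main_def[abs_def] by (intro holomorphic_intros holomorphic_powr_deriv) auto

lemma holomorphic_euler_boole:
  "q > 0 \<Longrightarrow> euler_boole q M holomorphic_on {z. Re z > - real M}"
  unfolding euler_boole_def[abs_def]
  by (intro holomorphic_intros holomorphic_euler_boole_main holomorphic_euler_boole_remainder) auto

lemma euler_boole_Suc:
  assumes "q > 0" "Re z > - real M"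
  shows "euler_boole q (Suc M) z = euler_boole q M z"
proof -
  define c where "c = (of_real (euler_poly (Suc M) 0 / fact (Suc M)) :: complex)"
  define f where "f = powr_deriv q (Suc M) z 0"
  have R: "euler_boole_remainder q (Suc M) z = - c * f - euler_boole_remainder q M z"
    using euler_boole_remainder_Suc[OF assms] by (simp add: c_def f_def eq_diff_eq)
  have half: "of_real (euler_poly (Suc M) 0 / (2 * fact (Suc M))) = c / 2"
    by (simp add: c_def)
  have "odd M \<Longrightarrow> c = 0"
    by (simp add: c_def euler_poly_at_0_even)
  then show ?thesis
    unfolding euler_boole_def euler_boole_main_def sum.atMost_Suc half R f_def[symmetric]
    by (cases "even M") (simp_all add: field_simps)
qed

lemma euler_boole_0_sums:
  assumes q: "q > 0" and z: "Re z > 0"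
  shows "(\<lambda>n. (-1) ^ n * of_real (real n + q) powr (- z)) sums euler_boole q 0 z"
proof -
  let ?f = "\<lambda>x. powr_deriv q 0 z x"
  have partial: "(\<Sum>n<N. (-1) ^ n * ?f (real n))
      = (?f 0 - (\<Sum>n<N. (-1) ^ n * euler_boole_term q 0 z n) - (-1) ^ N * ?f (real N)) / 2" for N
    by (induction N) (simp_all add: algebra_simps add_divide_distrib)
  have "(\<lambda>N. (?f 0 - (\<Sum>n<N. (-1) ^ n * euler_boole_term q 0 z n) - (-1) ^ N * ?f (real N)) / 2)
      \<longlonglongrightarrow> (?f 0 - euler_boole_remainder q 0 z - 0) / 2"
  proof (intro tendsto_intros)
    show "(\<lambda>N. \<Sum>n<N. (-1) ^ n * euler_boole_term q 0 z n) \<longlonglongrightarrow> euler_boole_remainder q 0 z"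
      using euler_boole_remainder_sums[where k = 0 and z = z] q z by (simp add: sums_def)
    have "(\<lambda>N. ?f (real N)) \<longlonglongrightarrow> 0"
      using q z by (intro powr_deriv_tendsto_0) auto
    then show "(\<lambda>N. (-1) ^ N * ?f (real N)) \<longlonglongrightarrow> 0"
      by (rule tendsto_alternating_0)
  qed simp
  then have "(\<lambda>n. (-1) ^ n * ?f (real n)) sums ((?f 0 - euler_boole_remainder q 0 z - 0) / 2)"
    unfolding sums_def partial .
  then show ?thesis
    by (simp add: euler_boole_def euler_boole_main_def powr_deriv_0 diff_divide_distrib)
qed

section \<open>Analytic continuation\<close>

lemma holomorphic_on_UNIV_from_halfplanes:
  fixes F :: "nat \<Rightarrow> complex \<Rightarrow> complex"
  assumes hol: "\<And>M. F M holomorphic_on {z. Re z > - real M}"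
    and consistent: "\<And>M z. Re z > - real M \<Longrightarrow> F (Suc M) z = F M z"
  obtains G where "G holomorphic_on UNIV" and "\<And>M z. Re z > - real M \<Longrightarrow> G z = F M z"
proof
  define m where "m z = nat \<lceil>- Re z\<rceil> + 1" for z :: complex
  have m: "Re z > - real (m z)" for z
    unfolding m_def by linarith
  have F_eq: "F M' z = F M z" if "M \<le> M'" "Re z > - real M" for M M' z
    using that(1)
  proof (induction M' rule: dec_induct)
    case (step M')
    then show ?case
      using that(2) consistent[of M' z] by simp
  qed simp
  show eq: "F (m z) z = F M z" if "Re z > - real M" for M z
    using F_eq[of M "max M (m z)" z] F_eq[of "m z" "max M (m z)" z] that m[of z] by simp
  show "(\<lambda>z. F (m z) z) holomorphic_on UNIV"
    unfolding holomorphic_on_def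
  proof
    fix x :: complex
    let ?S = "{z. Re z > - real (m x)}"
    have S: "open ?S" "x \<in> ?S"
      using m[of x] by (auto simp: open_halfspace_Re_gt)
    then obtain D where "(F (m x) has_field_derivative D) (at x)"
      using hol[of "m x"] holomorphic_on_imp_differentiable_at field_differentiable_def by blast
    then have "((\<lambda>z. F (m z) z) has_field_derivative D) (at x)"
      by (rule has_field_derivative_transform_within_open[OF _ S]) (auto simp: eq)
    then show "(\<lambda>z. F (m z) z) field_differentiable at x within UNIV"
      using field_differentiable_def by blast
  qed
qed

lemma zetaE_eqI:
  assumes hol: "f holomorphic_on UNIV"
    and sums: "\<And>z. Re z > 0 \<Longrightarrow> (\<lambda>n. (-1) ^ n * of_real (real n + q) powr (- z)) sums f z"
  shows "zetaE q = f"
  unfolding zetaE_def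
proof (rule the_equality)
  show "f holomorphic_on UNIV \<and>
      (\<forall>z. 0 < Re z \<longrightarrow> (\<lambda>n. (-1) ^ n * of_real (real n + q) powr (- z)) sums f z)"
    using assms by blast
  fix g
  assume g: "g holomorphic_on UNIV \<and>
      (\<forall>z. 0 < Re z \<longrightarrow> (\<lambda>n. (-1) ^ n * of_real (real n + q) powr (- z)) sums g z)"
  have "g z = f z" if "z \<in> {z. Re z > 0}" for z
    using g sums[of z] that sums_unique2 by auto
  moreover have "{z. Re z > 0} \<noteq> {}"
    using exI[of "\<lambda>z::complex. Re z > 0" 1] by auto
  ultimately show "g = f"
    using analytic_continuation_open[of "{z. Re z > 0}" UNIV g f] g hol
    by (auto simp: open_halfspace_Re_gt)
qed

lemma zetaE_eq_euler_boole:
  assumes "q > 0" "Re z > - real M"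
  shows "zetaE q z = euler_boole q M z"
proof -
  obtain G where G: "G holomorphic_on UNIV" and G_eq: "\<And>M z. Re z > - real M \<Longrightarrow> G z = euler_boole q M z"
    using holomorphic_on_UNIV_from_halfplanes[of "euler_boole q"] assms(1)
      holomorphic_euler_boole euler_boole_Suc by blast
  have "zetaE q = G"
    using G G_eq[of 0] euler_boole_0_sums[OF assms(1)] by (intro zetaE_eqI) auto
  then show ?thesis
    using G_eq[OF assms(2)] by simp
qed

section \<open>Expansion of the modified Stieltjes constants\<close>

lemma higher_deriv_sum:
  fixes f :: "'i \<Rightarrow> complex \<Rightarrow> complex"
  assumes "finite A" "\<And>k. k \<in> A \<Longrightarrow> f k holomorphic_on S" "open S" "z \<in> S"
  shows "(deriv ^^ n) (\<lambda>w. \<Sum>k\<in>A. f k w) z = (\<Sum>k\<in>A. (deriv ^^ n) (f k) z)"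
  using assms(1,2)
proof (induction A rule: finite_induct)
  case (insert a A)
  have "(deriv ^^ n) (\<lambda>w. f a w + (\<Sum>k\<in>A. f k w)) z
      = (deriv ^^ n) (f a) z + (deriv ^^ n) (\<lambda>w. \<Sum>k\<in>A. f k w) z"
    using insert.prems assms(3,4) by (intro higher_deriv_add) (auto intro!: holomorphic_intros)
  then show ?case
    using insert by simp
qed simp

lemma higher_deriv_powr_deriv_at_1:
  assumes q: "q > 0"
  shows "(-1) ^ l * (deriv ^^ l) (\<lambda>z. powr_deriv q k z 0) 1 =
    of_real (q powr (- real k - 1) * (\<Sum>j=0..l. real (l choose j) * fact j
      * real_of_int (stirling1s (Suc k) (Suc j)) * ln q ^ (l - j)))"
proof -
  define L where "L = (of_real (ln q) :: complex)"
  let ?P = "\<lambda>z. (-1) ^ k * pochhammer z k" and ?E = "\<lambda>z. exp ((- L) * z + (- of_nat k * L))"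
  have "- L - of_nat k * L = of_real ((- real k - 1) * ln q)"
    by (simp add: L_def algebra_simps)
  then have "?E 1 = exp (of_real ((- real k - 1) * ln q))"
    by simp
  also have "\<dots> = of_real (exp ((- real k - 1) * ln q))"
    by (rule exp_of_real)
  also have "exp ((- real k - 1) * ln q) = q powr (- real k - 1)"
    using q by (simp add: powr_def)
  finally have E_1: "?E 1 = of_real (q powr (- real k - 1))" .
  have "(\<lambda>z. powr_deriv q k z 0) = (\<lambda>z. ?P z * ?E z)"
    using q by (simp add: powr_deriv_eq_exp L_def algebra_simps fun_eq_iff)
  then have Leibniz: "(deriv ^^ l) (\<lambda>z. powr_deriv q k z 0) 1
      = (\<Sum>i = 0..l. of_nat (l choose i) * (deriv ^^ i) ?P 1 * (deriv ^^ (l - i)) ?E 1)"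
    by (simp only:) (rule higher_deriv_mult[of _ UNIV], auto intro!: holomorphic_intros)
  have "(-1) ^ l * (deriv ^^ l) (\<lambda>z. powr_deriv q k z 0) 1
      = (\<Sum>i = 0..l. of_nat (l choose i) * ((-1) ^ i * (deriv ^^ i) ?P 1) * ((-1) ^ (l - i) * (deriv ^^ (l - i)) ?E 1))"
    unfolding Leibniz sum_distrib_left
    by (intro sum.cong refl) (simp add: mult_ac flip: power_add)
  also have "\<dots> = (\<Sum>i = 0..l. of_nat (l choose i) * (fact i * of_int (stirling1s (Suc k) (Suc i))) * (L ^ (l - i) * ?E 1))"
    by (simp only: higher_deriv_neg_pochhammer_at_1 higher_deriv_exp_linear)
       (simp add: mult.assoc[symmetric] flip: power_mult_distrib)
  also have "\<dots> = of_real (q powr (- real k - 1) * (\<Sum>j=0..l. real (l choose j) * fact j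
      * real_of_int (stirling1s (Suc k) (Suc j)) * ln q ^ (l - j)))"
    unfolding E_1 by (simp add: L_def sum_distrib_left mult_ac)
  finally show ?thesis .
qed

text \<open>The contribution of the \<open>k\<close>-th Euler--Boole term to \<open>\<tilde>\<gamma>\<^sub>l(q)\<close>.\<close>

definition euler_boole_coeff :: "nat \<Rightarrow> nat \<Rightarrow> real \<Rightarrow> real" where
  "euler_boole_coeff l k q = euler_poly k 0 / (2 * fact k) * q powr (- real k - 1) *
     (\<Sum>j=0..l. real (l choose j) * fact j * real_of_int (stirling1s (Suc k) (Suc j)) * ln q ^ (l - j))"

lemma higher_deriv_euler_boole_main_at_1:
  assumes q: "q > 0"
  shows "(-1) ^ l * (deriv ^^ l) (euler_boole_main q M) 1 = of_real (\<Sum>k\<le>M. euler_boole_coeff l k q)"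
proof -
  have "(deriv ^^ l) (euler_boole_main q M) 1
      = (\<Sum>k\<le>M. (deriv ^^ l) (\<lambda>z. of_real (euler_poly k 0 / (2 * fact k)) * powr_deriv q k z 0) 1)"
    unfolding euler_boole_main_def[abs_def] using q
    by (intro higher_deriv_sum[of _ _ UNIV]) (auto intro!: holomorphic_intros holomorphic_powr_deriv)
  also have "\<dots> = (\<Sum>k\<le>M. of_real (euler_poly k 0 / (2 * fact k)) * (deriv ^^ l) (\<lambda>z. powr_deriv q k z 0) 1)"
    using q by (intro sum.cong refl higher_deriv_cmult[of _ UNIV] holomorphic_powr_deriv) auto
  finally have "(-1) ^ l * (deriv ^^ l) (euler_boole_main q M) 1 = (\<Sum>k\<le>M.
      of_real (euler_poly k 0 / (2 * fact k)) * ((-1) ^ l * (deriv ^^ l) (\<lambda>z. powr_deriv q k z 0) 1))"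
    by (simp add: sum_distrib_left mult_ac)
  also have "\<dots> = (\<Sum>k\<le>M. of_real (euler_boole_coeff l k q))"
    by (intro sum.cong refl) (simp add: higher_deriv_powr_deriv_at_1[OF q] euler_boole_coeff_def mult.assoc)
  finally show ?thesis
    by simp
qed

lemma norm_euler_boole_remainder_le:
  assumes M: "M \<ge> 1"
  obtains C where "\<And>q z. q \<ge> 1 \<Longrightarrow> norm (z - 1) \<le> 1/2 \<Longrightarrow>
    norm (euler_boole_remainder q M z) \<le> C * q powr (1/2 - real M)"
proof -
  obtain B where "B \<ge> 0" and B: "\<And>q z n d r. q > 0 \<Longrightarrow> real n + q \<ge> 1 \<Longrightarrow> 0 \<le> d \<Longrightarrow>
      d \<le> Re z + real M \<Longrightarrow> norm z \<le> r \<Longrightarrow>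
      norm (euler_boole_term q M z n) \<le> B * pochhammer r (Suc M) * (real n + q) powr - (d + 1)"
    using euler_boole_term_dominated by metis
  have summable: "summable (\<lambda>n. (real n + 1) powr - 2)"
    by (rule summable_shifted_powr) auto
  show ?thesis
  proof
    fix q :: real and z :: complex
    assume q: "q \<ge> 1" and z: "norm (z - 1) \<le> 1/2"
    have Re_z: "real M + 1/2 \<le> Re z + real M"
      using z abs_Re_le_cmod[of "z - 1"] by simp
    have norm_z: "norm z \<le> 3/2"
      using z norm_triangle_ineq2[of z 1] by simp
    let ?c = "B * pochhammer (3/2) (Suc M) * q powr (1/2 - real M)"
    have "norm ((-1) ^ n * euler_boole_term q M z n) \<le> ?c * (real n + 1) powr - 2" for n
    proof -
      have "(real n + q) powr - (real M + 1/2 + 1) = (real n + q) powr (1/2 - real M) * (real n + q) powr - 2"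
        by (simp flip: powr_add)
      also have "\<dots> \<le> q powr (1/2 - real M) * (real n + 1) powr - 2"
        using q M by (intro mult_mono powr_mono2') auto
      finally have decay: "(real n + q) powr - (real M + 1/2 + 1) \<le> q powr (1/2 - real M) * (real n + 1) powr - 2" .
      have "norm ((-1) ^ n * euler_boole_term q M z n) = norm (euler_boole_term q M z n)"
        by (simp add: norm_mult norm_power)
      also have "\<dots> \<le> B * pochhammer (3/2) (Suc M) * (real n + q) powr - (real M + 1/2 + 1)"
        using B[OF _ _ _ Re_z norm_z] q by simp
      also have "\<dots> \<le> B * pochhammer (3/2) (Suc M) * (q powr (1/2 - real M) * (real n + 1) powr - 2)"
        using \<open>B \<ge> 0\<close> by (intro mult_left_mono[OF decay]) (simp add: pochhammer_nonneg)
      finally show ?thesis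
        by (simp only: mult_ac)
    qed
    then have "norm (euler_boole_remainder q M z) \<le> (\<Sum>n. ?c * (real n + 1) powr - 2)"
      unfolding euler_boole_remainder_def using summable by (intro norm_suminf_le summable_mult)
    also have "\<dots> = (B * pochhammer (3/2) (Suc M) * (\<Sum>n. (real n + 1) powr - 2)) * q powr (1/2 - real M)"
      unfolding suminf_mult[OF summable] by (simp add: mult_ac)
    finally show "norm (euler_boole_remainder q M z) \<le> \<dots>" .
  qed
qed

lemma higher_deriv_zetaE_at_1:
  assumes q: "q > 0"
  shows "(deriv ^^ l) (zetaE q) 1 =
    (deriv ^^ l) (euler_boole_main q M) 1 - (-1) ^ M / 2 * (deriv ^^ l) (euler_boole_remainder q M) 1"
proof -
  let ?S = "{z. Re z > - real M}"
  have S: "open ?S" "1 \<in> ?S"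
    by (auto simp: open_halfspace_Re_gt)
  have zetaE_eq: "zetaE q z = euler_boole q M z" if "z \<in> ?S" for z
    using zetaE_eq_euler_boole[OF q] that by simp
  have hol: "euler_boole q M holomorphic_on ?S" "euler_boole_remainder q M holomorphic_on ?S"
    using holomorphic_euler_boole[OF q] holomorphic_euler_boole_remainder[OF q] by auto
  have "(deriv ^^ l) (zetaE q) 1 = (deriv ^^ l) (euler_boole q M) 1"
    using hol(1) zetaE_eq S by (intro higher_deriv_transform_within_open[of _ ?S]) (auto intro: holomorphic_transform)
  also have "euler_boole q M = (\<lambda>z. euler_boole_main q M z - (-1) ^ M / 2 * euler_boole_remainder q M z)"
    by (simp add: euler_boole_def[abs_def])
  also have "(deriv ^^ l) \<dots> 1 = (deriv ^^ l) (euler_boole_main q M) 1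
      - (deriv ^^ l) (\<lambda>z. (-1) ^ M / 2 * euler_boole_remainder q M z) 1"
    using hol(2) S holomorphic_euler_boole_main[OF q]
    by (intro higher_deriv_diff[of _ ?S]) (auto intro!: holomorphic_intros)
  also have "(deriv ^^ l) (\<lambda>z. (-1) ^ M / 2 * euler_boole_remainder q M z) 1
      = (-1) ^ M / 2 * (deriv ^^ l) (euler_boole_remainder q M) 1"
    using hol(2) S by (intro higher_deriv_cmult[of _ ?S]) auto
  finally show ?thesis .
qed

lemma mod_stieltjes_expansion:
  assumes M: "M \<ge> 1"
  obtains C where "\<And>q. q \<ge> 1 \<Longrightarrow>
    norm (mod_stieltjes l q - of_real (\<Sum>k\<le>M. euler_boole_coeff l k q)) \<le> C * q powr (1/2 - real M)"
proof -
  obtain C where C: "\<And>q z. q \<ge> 1 \<Longrightarrow> norm (z - 1) \<le> 1/2 \<Longrightarrow>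
      norm (euler_boole_remainder q M z) \<le> C * q powr (1/2 - real M)"
    using norm_euler_boole_remainder_le[OF M] by blast
  show ?thesis
  proof
    fix q :: real
    assume q: "q \<ge> 1"
    let ?R = "euler_boole_remainder q M"
    have "cball 1 (1/2) \<subseteq> {z. Re z > - real M}"
    proof
      fix z :: complex
      assume "z \<in> cball 1 (1/2)"
      then show "z \<in> {z. Re z > - real M}"
        using abs_Re_le_cmod[of "1 - z"] by (simp add: dist_norm)
    qed
    then have "?R holomorphic_on cball 1 (1/2)"
      using holomorphic_euler_boole_remainder[of q M] q by (auto intro: holomorphic_on_subset)
    then have hol: "?R holomorphic_on ball 1 (1/2)" "continuous_on (cball 1 (1/2)) ?R"
      by (auto intro: holomorphic_on_subset holomorphic_on_imp_continuous_on)
    have Cauchy: "norm ((deriv ^^ l) ?R 1) \<le> fact l * (C * q powr (1/2 - real M)) / (1/2) ^ l"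
      using hol C q by (intro Cauchy_inequality) (auto simp: norm_minus_commute)
    have "mod_stieltjes l q - of_real (\<Sum>k\<le>M. euler_boole_coeff l k q)
        = - ((-1) ^ l * (-1) ^ M / 2 * (deriv ^^ l) ?R 1)"
      using q higher_deriv_euler_boole_main_at_1[of q l M]
      by (simp add: mod_stieltjes_def higher_deriv_zetaE_at_1[of q l M] algebra_simps)
    then have "norm (mod_stieltjes l q - of_real (\<Sum>k\<le>M. euler_boole_coeff l k q))
        = norm ((deriv ^^ l) ?R 1) / 2"
      by (simp add: norm_mult norm_divide norm_power)
    also have "\<dots> \<le> fact l * (C * q powr (1/2 - real M)) / (1/2) ^ l / 2"
      using Cauchy by (rule divide_right_mono) simp
    also have "\<dots> = fact l * 2 ^ l / 2 * C * q powr (1/2 - real M)"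
      by (simp add: field_simps)
    finally show "norm (mod_stieltjes l q - of_real (\<Sum>k\<le>M. euler_boole_coeff l k q))
        \<le> fact l * 2 ^ l / 2 * C * q powr (1/2 - real M)" .
  qed
qed

section \<open>The asymptotic expansion\<close>

definition stieltjes_term :: "nat \<Rightarrow> nat \<Rightarrow> real \<Rightarrow> real" where
  "stieltjes_term l = (\<lambda>(n::nat) (q::real).
    if n = 0 then ln q ^ l / (2 * q)
    else if n = 1 then - (real l * ln q ^ (l - 1) - ln q ^ l) / (4 * q ^ 2)
    else euler_poly (2 * (n - 1) + 1) 0 / (2 * q ^ (2 * (n - 1) + 2) * fact (2 * (n - 1) + 1)) *
         (\<Sum>j = 0..l. real (l choose j) * fact j * real_of_int (stirling1s (2 * (n - 1) + 2) (j + 1))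
                       * ln q ^ (l - j)))"

text \<open>The \<open>n\<close>-th term of the expansion comes from the \<open>n\<close>-th Euler--Boole term with
  \<open>E\<^sub>k(0) \<noteq> 0\<close>, i.e. with \<open>k = 0\<close> or \<open>k\<close> odd.\<close>

definition stieltjes_index :: "nat \<Rightarrow> nat" where
  "stieltjes_index n = (if n = 0 then 0 else 2 * n - 1)"

lemma powr_minus_Suc: "q > 0 \<Longrightarrow> q powr (- real k - 1) = 1 / q ^ Suc k"
proof -
  assume q: "q > 0"
  have "q powr (- real k - 1) = q powr (- real (Suc k))"
    by (rule arg_cong[where f = "(powr) q"]) simp
  also have "\<dots> = inverse (q powr real (Suc k))"
    by (rule powr_minus)
  also have "\<dots> = 1 / q ^ Suc k"
    by (simp only: powr_realpow[OF q] inverse_eq_divide)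
  finally show ?thesis .
qed

lemma stieltjes_term_eq_coeff:
  assumes q: "q > 0"
  shows "stieltjes_term l n q = euler_boole_coeff l (stieltjes_index n) q"
proof -
  consider "n = 0" | "n = 1" | "n \<ge> 2"
    by linarith
  then show ?thesis
  proof cases
    case 1
    then show ?thesis
      using q by (simp add: stieltjes_term_def euler_boole_coeff_def stieltjes_index_def
          powr_minus_Suc sum_stirling1s_1)
  next
    case 2
    have "q powr (- real 1 - 1) = 1 / q ^ 2"
      using powr_minus_Suc[OF q, of 1] by (simp add: numeral_2_eq_2)
    then show ?thesis
      using 2 q euler_poly_1_0
      by (simp add: stieltjes_term_def euler_boole_coeff_def stieltjes_index_def sum_stirling1s_2)
         (simp add: field_simps)
  next
    case 3
    define m where "m = 2 * (n - 1) + 1"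
    have "stieltjes_index n = m"
      using 3 by (simp add: stieltjes_index_def m_def)
    then have "euler_boole_coeff l (stieltjes_index n) q = euler_poly m 0 / (2 * fact m) * (1 / q ^ Suc m) *
        (\<Sum>j=0..l. real (l choose j) * fact j * real_of_int (stirling1s (Suc m) (Suc j)) * ln q ^ (l - j))"
      unfolding euler_boole_coeff_def powr_minus_Suc[OF q] by simp
    also have "\<dots> = stieltjes_term l n q"
      using 3 q by (simp add: stieltjes_term_def m_def field_simps)
    finally show ?thesis ..
  qed
qed

lemma sum_euler_boole_coeff_eq:
  assumes "q > 0"
  shows "(\<Sum>k\<le>2 * N + 2. euler_boole_coeff l k q) = (\<Sum>n<N + 2. stieltjes_term l n q)"
proof (induction N)
  case 0
  show ?case
    using assms by (simp add: numeral_2_eq_2 stieltjes_term_eq_coeff stieltjes_index_def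
        euler_boole_coeff_def euler_poly_at_0_even)
next
  case (Suc N)
  have "2 * Suc N + 2 = Suc (Suc (2 * N + 2))" "stieltjes_index (N + 2) = Suc (2 * N + 2)"
    by (simp_all add: stieltjes_index_def)
  then show ?case
    using Suc assms by (simp add: stieltjes_term_eq_coeff euler_boole_coeff_def euler_poly_at_0_even)
qed

lemma sum_ln_power_div_tendsto:
  "((\<lambda>q :: real. (\<Sum>j=0..l. c j * ln q ^ (l - j)) / ln q ^ l) \<longlongrightarrow> c 0) at_top"
proof -
  have "eventually (\<lambda>q. (\<Sum>j=0..l. c j * inverse (ln q) ^ j) = (\<Sum>j=0..l. c j * ln q ^ (l - j)) / ln q ^ l) at_top"
  proof (rule eventually_mono[OF eventually_gt_at_top[of "1::real"]])
    fix q :: real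
    assume "q > 1"
    then have "ln q \<noteq> 0"
      by simp
    have "(\<Sum>j=0..l. c j * ln q ^ (l - j)) / ln q ^ l = (\<Sum>j=0..l. c j * (ln q ^ (l - j) / ln q ^ l))"
      by (simp add: sum_divide_distrib)
    also have "\<dots> = (\<Sum>j=0..l. c j * inverse (ln q) ^ j)"
      using \<open>ln q \<noteq> 0\<close> by (intro sum.cong refl) (simp add: power_diff power_inverse field_simps)
    finally show "(\<Sum>j=0..l. c j * inverse (ln q) ^ j) = (\<Sum>j=0..l. c j * ln q ^ (l - j)) / ln q ^ l"
      by simp
  qed
  moreover have "((\<lambda>q. \<Sum>j=0..l. c j * inverse (ln q) ^ j) \<longlongrightarrow> (\<Sum>j=0..l. c j * 0 ^ j)) at_top"
    by (intro tendsto_intros tendsto_inverse_0_at_top ln_at_top)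
  moreover have "(\<Sum>j=0..l. c j * 0 ^ j) = c 0"
    by (simp add: power_0_left sum.delta if_distrib cong: if_cong)
  ultimately show ?thesis
    by (auto intro: Lim_transform_eventually)
qed

lemma euler_boole_coeff_bigtheta:
  assumes "euler_poly k 0 \<noteq> 0"
  shows "euler_boole_coeff l k \<in> \<Theta>[at_top](\<lambda>q. ln q ^ l * q powr (- real k - 1))"
proof (rule bigthetaI_tendsto)
  let ?c = "\<lambda>j. real (l choose j) * fact j * real_of_int (stirling1s (Suc k) (Suc j))"
  show "euler_poly k 0 / (2 * fact k) * ?c 0 \<noteq> 0"
    using assms by (simp add: stirling1s_Suc_1)
  have "eventually (\<lambda>q. euler_poly k 0 / (2 * fact k) * ((\<Sum>j=0..l. ?c j * ln q ^ (l - j)) / ln q ^ l)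
      = euler_boole_coeff l k q / (ln q ^ l * q powr (- real k - 1))) at_top"
    using eventually_gt_at_top[of "1::real"]
    by eventually_elim (simp add: euler_boole_coeff_def field_simps)
  then show "((\<lambda>q. euler_boole_coeff l k q / (ln q ^ l * q powr (- real k - 1)))
      \<longlongrightarrow> euler_poly k 0 / (2 * fact k) * ?c 0) at_top"
    by (rule Lim_transform_eventually[OF tendsto_mult_left[OF sum_ln_power_div_tendsto]])
qed

lemma stieltjes_term_bigtheta:
  "stieltjes_term l n \<in> \<Theta>[at_top](\<lambda>q. ln q ^ l * q powr (- real (stieltjes_index n) - 1))"
proof -
  have "euler_poly (stieltjes_index n) 0 \<noteq> 0"
    by (cases "n = 0") (simp_all add: stieltjes_index_def euler_poly_at_0_odd)
  then have "euler_boole_coeff l (stieltjes_index n) \<in> \<Theta>[at_top](\<lambda>q. ln q ^ l * q powr (- real (stieltjes_index n) - 1))"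
    by (rule euler_boole_coeff_bigtheta)
  moreover have "eventually (\<lambda>q. euler_boole_coeff l (stieltjes_index n) q = stieltjes_term l n q) at_top"
    using eventually_gt_at_top[of "0::real"] by eventually_elim (simp add: stieltjes_term_eq_coeff)
  ultimately show ?thesis
    by (simp add: landau_theta.in_cong)
qed

lemma ln_power_powr_smallo:
  fixes a b :: real
  assumes "b < a"
  shows "(\<lambda>q :: real. ln q ^ l * q powr b) \<in> o[at_top](\<lambda>q. ln q ^ l * q powr a)"
  using assms by (intro landau_o.small.mult_left) (simp add: powr_smallo_iff filterlim_ident)

lemma powr_bigo_ln_power_powr: "(\<lambda>q :: real. q powr a) \<in> O[at_top](\<lambda>q. ln q ^ l * q powr a)"
proof (rule bigoI[where c = 1])
  show "\<forall>\<^sub>F q in at_top. norm (q powr a) \<le> 1 * norm (ln q ^ l * q powr a)"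
  proof (rule eventually_mono[OF eventually_ge_at_top[of "exp 1"]])
    fix q :: real
    assume "q \<ge> exp 1"
    then have "ln q \<ge> 1"
      using ln_exp ln_le_cancel_iff[of "exp 1" q] by (metis exp_gt_zero less_le_trans)
    then show "norm (q powr a) \<le> 1 * norm (ln q ^ l * q powr a)"
      by (simp add: abs_mult one_le_power mult_le_cancel_right1)
  qed
qed

lemma powr_smallo_stieltjes_term:
  assumes "a < - real (stieltjes_index n) - 1"
  shows "(\<lambda>q. q powr a) \<in> o[at_top](stieltjes_term l n)"
proof -
  have "(\<lambda>q. q powr a) \<in> o[at_top](\<lambda>q. q powr (- real (stieltjes_index n) - 1))"
    using assms by (simp add: powr_smallo_iff filterlim_ident)
  also have "(\<lambda>q. q powr (- real (stieltjes_index n) - 1))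
      \<in> O[at_top](\<lambda>q. ln q ^ l * q powr (- real (stieltjes_index n) - 1))"
    by (rule powr_bigo_ln_power_powr)
  also have "(\<lambda>q. ln q ^ l * q powr (- real (stieltjes_index n) - 1)) \<in> O[at_top](stieltjes_term l n)"
    using stieltjes_term_bigtheta[of l n] by (simp add: bigtheta_sym bigthetaD1)
  finally show ?thesis .
qed

lemma stieltjes_term_Suc_smallo: "stieltjes_term l (Suc n) \<in> o[at_top](stieltjes_term l n)"
proof -
  have "stieltjes_term l (Suc n) \<in> O[at_top](\<lambda>q. ln q ^ l * q powr (- real (stieltjes_index (Suc n)) - 1))"
    using stieltjes_term_bigtheta by blast
  also have "(\<lambda>q. ln q ^ l * q powr (- real (stieltjes_index (Suc n)) - 1))
      \<in> o[at_top](\<lambda>q. ln q ^ l * q powr (- real (stieltjes_index n) - 1))"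
    by (intro ln_power_powr_smallo) (simp add: stieltjes_index_def)
  also have "(\<lambda>q. ln q ^ l * q powr (- real (stieltjes_index n) - 1)) \<in> O[at_top](stieltjes_term l n)"
    using stieltjes_term_bigtheta[of l n] by (simp add: bigtheta_sym bigthetaD1)
  finally show ?thesis .
qed

lemma mod_stieltjes_remainder_smallo:
  "(\<lambda>q. mod_stieltjes l q - of_real (\<Sum>k\<le>2 * N + 2. euler_boole_coeff l k q))
     \<in> o[at_top](\<lambda>q. of_real (stieltjes_term l N q))"
proof -
  obtain C where C: "\<And>q. q \<ge> 1 \<Longrightarrow> norm (mod_stieltjes l q - of_real (\<Sum>k\<le>2 * N + 2. euler_boole_coeff l k q))
      \<le> C * q powr (1/2 - real (2 * N + 2))"
    using mod_stieltjes_expansion[of "2 * N + 2" l] by auto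
  have "(\<lambda>q. mod_stieltjes l q - of_real (\<Sum>k\<le>2 * N + 2. euler_boole_coeff l k q))
      \<in> O[at_top](\<lambda>q. of_real (q powr (1/2 - real (2 * N + 2))))"
  proof (intro bigoI[where c = C] eventually_mono[OF eventually_ge_at_top[of "1::real"]])
    fix q :: real
    assume "q \<ge> 1"
    then show "norm (mod_stieltjes l q - of_real (\<Sum>k\<le>2 * N + 2. euler_boole_coeff l k q))
        \<le> C * norm (of_real (q powr (1/2 - real (2 * N + 2))) :: complex)"
      using C[of q] by simp
  qed
  also have "(\<lambda>q. of_real (q powr (1/2 - real (2 * N + 2))) :: complex)
      \<in> o[at_top](\<lambda>q. of_real (stieltjes_term l N q))"
    unfolding landau_o.small.of_real_iff
    by (rule powr_smallo_stieltjes_term) (simp add: stieltjes_index_def)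
  finally show ?thesis .
qed

lemma mod_stieltjes_minus_partial_sum_bigo:
  "(\<lambda>q. mod_stieltjes l q - of_real (\<Sum>n<N. stieltjes_term l n q))
     \<in> O[at_top](\<lambda>q. of_real (stieltjes_term l N q))"
proof -
  let ?T = "stieltjes_term l"
  let ?R = "\<lambda>q. mod_stieltjes l q - of_real (\<Sum>k\<le>2 * N + 2. euler_boole_coeff l k q)"
  have eq: "eventually (\<lambda>q. ?R q + of_real (?T N q) + of_real (?T (Suc N) q)
      = mod_stieltjes l q - of_real (\<Sum>n<N. ?T n q)) at_top"
  proof (rule eventually_mono[OF eventually_gt_at_top[of "0::real"]])
    fix q :: real
    assume "q > 0"
    then have "(\<Sum>k\<le>2 * N + 2. euler_boole_coeff l k q) = (\<Sum>n<N. ?T n q) + ?T N q + ?T (Suc N) q"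
      using sum_euler_boole_coeff_eq[where q = q and N = N and l = l]
      by (simp only: add_2_eq_Suc' sum.lessThan_Suc)
    then show "?R q + of_real (?T N q) + of_real (?T (Suc N) q) = mod_stieltjes l q - of_real (\<Sum>n<N. ?T n q)"
      by (simp only: of_real_add) (simp add: algebra_simps)
  qed
  have "(\<lambda>q. ?R q + of_real (?T N q)) \<in> O[at_top](\<lambda>q. of_real (?T N q))"
    by (rule sum_in_bigo(1)[OF landau_o.small_imp_big[OF mod_stieltjes_remainder_smallo]]) simp
  moreover have "(\<lambda>q. of_real (?T (Suc N) q) :: complex) \<in> O[at_top](\<lambda>q. of_real (?T N q))"
    unfolding landau_o.big.of_real_iff by (rule landau_o.small_imp_big[OF stieltjes_term_Suc_smallo])
  ultimately have "(\<lambda>q. ?R q + of_real (?T N q) + of_real (?T (Suc N) q)) \<in> O[at_top](\<lambda>q. of_real (?T N q))"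
    by (rule sum_in_bigo(1))
  then show ?thesis
    by (rule landau_o.big.in_cong[OF eq, THEN iffD1])
qed

theorem theorem3p17:
  fixes l :: nat
  defines "T \<equiv> \<lambda>(n::nat) (q::real).
    if n = 0 then ln q ^ l / (2 * q)
    else if n = 1 then - (real l * ln q ^ (l - 1) - ln q ^ l) / (4 * q ^ 2)
    else euler_poly (2 * (n - 1) + 1) 0 / (2 * q ^ (2 * (n - 1) + 2) * fact (2 * (n - 1) + 1)) *
         (\<Sum>j = 0..l. real (l choose j) * fact j * real_of_int (stirling1s (2 * (n - 1) + 2) (j + 1))
                       * ln q ^ (l - j))"
  shows "\<forall>N. (\<lambda>q. mod_stieltjes l q - complex_of_real (\<Sum>n<N. T n q))
              \<in> O[at_top](\<lambda>q. complex_of_real (T N q))"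
proof -
  have "T = stieltjes_term l"
    by (simp only: T_def stieltjes_term_def)
  then show ?thesis
    using mod_stieltjes_minus_partial_sum_bigo by simp
qed

end
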